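(* There exists an infinite class of 4-planar graphs such that no graph $G$ in the class admits a planar octilinear drawing without bends, and every planar octilinear drawing of a graph $G$ with $n$ vertices in the class having at most one bend per edge has $\Omega(n)$ bends in total.
   Context: A $k$-planar graph is a planar graph in which every vertex has degree at most $k$. An octilinear drawing of a graph places every vertex on a point of the integer grid and draws every edge as a polyline consisting of horizontal, vertical and diagonal (slope $\pm 1$) line segments; a bend is a point of an edge where two consecutive segments of different slopes meet. The drawing is planar if no two edges cross. *)

theory Defs
  imports "HOL-Analysis.Analysis"
begin

type_synonym pt = "real \<times> real"

definition simple_graph :: "'a set \<Rightarrow> 'a set set \<Rightarrow> bool" where
  "simple_graph V E \<longleftrightarrow> finite V \<and> (\<forall>e\<in>E. \<exists>u v. u \<in> V \<and> v \<in> V \<and> u \<noteq> v \<and> e = {u, v})"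

definition degree :: "'a set set \<Rightarrow> 'a \<Rightarrow> nat" where
  "degree E v = card {e \<in> E. v \<in> e}"

definition seg :: "pt list \<Rightarrow> nat \<Rightarrow> pt set" where
  "seg ps i = closed_segment (ps ! i) (ps ! Suc i)"

definition poly_path :: "pt list \<Rightarrow> pt set" where
  "poly_path ps = (\<Union>i < length ps - 1. seg ps i)"

definition simple_polyline :: "pt list \<Rightarrow> bool" where
  "simple_polyline ps \<longleftrightarrow> length ps \<ge> 2 \<and>
     (\<forall>i < length ps - 1. ps ! i \<noteq> ps ! Suc i) \<and>
     (\<forall>i j. i < j \<and> j < length ps - 1 \<longrightarrow>
        seg ps i \<inter> seg ps j = (if j = Suc i then {ps ! j} else {}))"

definition octilinear_seg :: "pt \<Rightarrow> pt \<Rightarrow> bool" where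
  "octilinear_seg a b \<longleftrightarrow> (let dx = fst b - fst a; dy = snd b - snd a in
      dx = 0 \<or> dy = 0 \<or> \<bar>dx\<bar> = \<bar>dy\<bar>)"

definition octilinear_polyline :: "pt list \<Rightarrow> bool" where
  "octilinear_polyline ps \<longleftrightarrow> (\<forall>i < length ps - 1. octilinear_seg (ps ! i) (ps ! Suc i))"

definition is_bend :: "pt list \<Rightarrow> nat \<Rightarrow> bool" where
  "is_bend ps i \<longleftrightarrow> 0 < i \<and> i < length ps - 1 \<and>
     (let a = ps ! (i - 1); b = ps ! i; c = ps ! Suc i in
        (fst b - fst a) * (snd c - snd b) - (snd b - snd a) * (fst c - fst b) \<noteq> 0)"

definition bends :: "pt list \<Rightarrow> nat" where
  "bends ps = card {i. is_bend ps i}"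

definition planar_poly_drawing ::
  "'a set \<Rightarrow> 'a set set \<Rightarrow> ('a \<Rightarrow> pt) \<Rightarrow> ('a set \<Rightarrow> pt list) \<Rightarrow> bool" where
  "planar_poly_drawing V E p r \<longleftrightarrow>
     inj_on p V \<and>
     (\<forall>e\<in>E. simple_polyline (r e) \<and>
        (\<exists>u v. e = {u, v} \<and> hd (r e) = p u \<and> last (r e) = p v)) \<and>
     (\<forall>e\<in>E. \<forall>e'\<in>E. e \<noteq> e' \<longrightarrow> poly_path (r e) \<inter> poly_path (r e') \<subseteq> p ` (e \<inter> e')) \<and>
     (\<forall>e\<in>E. \<forall>w\<in>V. w \<notin> e \<longrightarrow> p w \<notin> poly_path (r e))"

text \<open>Planar graph: admits a planar drawing with polygonal edges (equivalent to the
  topological definition).\<close>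
definition planar_graph :: "'a set \<Rightarrow> 'a set set \<Rightarrow> bool" where
  "planar_graph V E \<longleftrightarrow> simple_graph V E \<and> (\<exists>p r. planar_poly_drawing V E p r)"

definition k_planar :: "nat \<Rightarrow> 'a set \<Rightarrow> 'a set set \<Rightarrow> bool" where
  "k_planar k V E \<longleftrightarrow> planar_graph V E \<and> (\<forall>v\<in>V. degree E v \<le> k)"

definition planar_octilinear_drawing ::
  "'a set \<Rightarrow> 'a set set \<Rightarrow> ('a \<Rightarrow> int \<times> int) \<Rightarrow> ('a set \<Rightarrow> pt list) \<Rightarrow> bool" where
  "planar_octilinear_drawing V E q r \<longleftrightarrow>
     planar_poly_drawing V E (\<lambda>v. (real_of_int (fst (q v)), real_of_int (snd (q v)))) r \<and>
     (\<forall>e\<in>E. octilinear_polyline (r e))"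

definition total_bends :: "'a set set \<Rightarrow> ('a set \<Rightarrow> pt list) \<Rightarrow> nat" where
  "total_bends E r = (\<Sum>e\<in>E. bends (r e))"

end

theory Submission
  imports Defs
begin

text \<open>An edge drawn without bends is a straight octilinear segment. If all six edges of a \<open>K\<^sub>4\<close>
  were drawn like this, planarity would put the four vertices in general position, and four such
  points pairwise joined by octilinear segments form a square, whose diagonals cross at their common
  midpoint. So every planar octilinear drawing of \<open>K\<^sub>4\<close> has a bend, and \<open>m\<close> disjoint copies of
  \<open>K\<^sub>4\<close>, a 4-planar graph with \<open>4 m\<close> vertices, need at least \<open>m\<close> bends.\<close>

section \<open>Polylines without bends\<close>

lemma parallel_if_cross_eq_0:
  fixes d v :: pt
  assumes "d \<noteq> 0" "fst d * snd v - snd d * fst v = 0"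
  shows "\<exists>l. v = l *\<^sub>R d"
proof (cases "fst d = 0")
  case True
  then have "snd d \<noteq> 0" using assms(1) by (simp add: prod_eq_iff)
  then show ?thesis using True assms(2)
    by (intro exI[of _ "snd v / snd d"]) (auto simp: prod_eq_iff field_simps)
next
  case False
  then show ?thesis using assms(2)
    by (intro exI[of _ "fst v / fst d"]) (auto simp: prod_eq_iff field_simps)
qed

lemma not_is_bend_if_bends_eq_0:
  assumes "bends ps = 0"
  shows "\<not> is_bend ps i"
proof -
  have "finite {i. is_bend ps i}"
    by (rule finite_subset[of _ "{..<length ps}"]) (auto simp: is_bend_def)
  then show ?thesis using assms by (auto simp: bends_def)
qed

lemma bendless_polyline_on_line:
  assumes simple: "simple_polyline ps" and no_bends: "bends ps = 0" and "k < length ps"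
  shows "\<exists>t. ps ! k = ps ! 0 + t *\<^sub>R (ps ! 1 - ps ! 0)"
  using \<open>k < length ps\<close>
proof (induction k rule: less_induct)
  case (less k)
  define d where "d = ps ! 1 - ps ! 0"
  have distinct: "ps ! i \<noteq> ps ! Suc i" if "i < length ps - 1" for i
    using simple that by (simp add: simple_polyline_def)
  consider "k = 0" | "k = 1" | j where "k = Suc (Suc j)"
    by (metis One_nat_def not0_implies_Suc)
  then show ?case
  proof cases
    case 3
    then obtain j where k: "k = Suc (Suc j)" by blast
    obtain s where s: "ps ! Suc j = ps ! 0 + s *\<^sub>R d"
      using less.IH[of "Suc j"] less.prems k by (auto simp: d_def)
    obtain t where t: "ps ! j = ps ! 0 + t *\<^sub>R d"
      using less.IH[of j] less.prems k by (auto simp: d_def)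
    have "ps ! j \<noteq> ps ! Suc j" using distinct[of j] less.prems k by simp
    then have "s \<noteq> t" using s t by auto
    have "d \<noteq> 0" using distinct[of 0] less.prems k by (auto simp: d_def)
    have "\<not> is_bend ps (Suc j)" using not_is_bend_if_bends_eq_0[OF no_bends] .
    then have "(fst (ps ! Suc j) - fst (ps ! j)) * (snd (ps ! k) - snd (ps ! Suc j))
        - (snd (ps ! Suc j) - snd (ps ! j)) * (fst (ps ! k) - fst (ps ! Suc j)) = 0"
      using less.prems k by (simp add: is_bend_def Let_def)
    then have "(s - t) * (fst d * snd (ps ! k - ps ! Suc j) - snd d * fst (ps ! k - ps ! Suc j)) = 0"
      unfolding s t by (simp add: algebra_simps)
    then have "fst d * snd (ps ! k - ps ! Suc j) - snd d * fst (ps ! k - ps ! Suc j) = 0"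
      using \<open>s \<noteq> t\<close> by simp
    then obtain l where "ps ! k - ps ! Suc j = l *\<^sub>R d"
      using parallel_if_cross_eq_0[OF \<open>d \<noteq> 0\<close>] by blast
    then have "ps ! k = ps ! 0 + (s + l) *\<^sub>R d"
      using s by (simp add: algebra_simps)
    then show ?thesis by (auto simp: d_def)
  qed (auto intro: exI[of _ 0] exI[of _ 1])
qed

lemma closed_segment_subset_chain:
  fixes t :: "nat \<Rightarrow> real"
  assumes "0 < k"
  shows "closed_segment (t 0) (t k) \<subseteq> (\<Union>i<k. closed_segment (t i) (t (Suc i)))"
  using assms
proof (induction k)
  case (Suc k)
  show ?case
  proof (cases "k = 0")
    case False
    have "closed_segment (t 0) (t (Suc k)) \<subseteq> closed_segment (t 0) (t k) \<union> closed_segment (t k) (t (Suc k))"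
      by (auto simp: closed_segment_eq_real_ivl split: if_splits)
    with Suc False show ?thesis by (auto simp: lessThan_Suc)
  qed (simp add: lessThan_Suc)
qed simp

lemma octilinear_seg_along:
  assumes "octilinear_seg a b"
  shows "octilinear_seg (x + s *\<^sub>R (b - a)) (x + t *\<^sub>R (b - a))"
proof -
  have "fst (x + t *\<^sub>R (b - a)) - fst (x + s *\<^sub>R (b - a)) = (t - s) * (fst b - fst a)"
    "snd (x + t *\<^sub>R (b - a)) - snd (x + s *\<^sub>R (b - a)) = (t - s) * (snd b - snd a)"
    by (simp_all add: algebra_simps)
  then show ?thesis
    using assms unfolding octilinear_seg_def Let_def by (auto simp: abs_mult)
qed

lemma bendless_polyline_chord:
  assumes simple: "simple_polyline ps" and oct: "octilinear_polyline ps" and no_bends: "bends ps = 0"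
  shows "octilinear_seg (hd ps) (last ps) \<and> closed_segment (hd ps) (last ps) \<subseteq> poly_path ps"
proof -
  define d where "d = ps ! 1 - ps ! 0"
  define n where "n = length ps"
  define f where "f x = ps ! 0 + x *\<^sub>R d" for x
  have n: "2 \<le> n" and "ps \<noteq> []" using simple by (auto simp: simple_polyline_def n_def)
  obtain t where t: "\<And>k. k < n \<Longrightarrow> ps ! k = f (t k)"
    using bendless_polyline_on_line[OF simple no_bends] unfolding f_def d_def n_def by metis
  have lin: "linear (\<lambda>x::real. x *\<^sub>R d)" by (simp add: linearI scaleR_add_left)
  have segment_image: "closed_segment (f x) (f y) = f ` closed_segment x y" for x y
    unfolding f_def closed_segment_translation closed_segment_linear_image[OF lin] image_image ..
  have hd: "hd ps = f (t 0)" and last: "last ps = f (t (n - 1))"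
    using t[of 0] t[of "n - 1"] n \<open>ps \<noteq> []\<close> by (auto simp: hd_conv_nth last_conv_nth n_def)
  have "octilinear_seg (ps ! 0) (ps ! 1)" using oct n by (auto simp: octilinear_polyline_def n_def)
  then have "octilinear_seg (hd ps) (last ps)"
    unfolding hd last f_def d_def by (rule octilinear_seg_along)
  moreover have "closed_segment (hd ps) (last ps) \<subseteq> poly_path ps"
  proof -
    have "poly_path ps = f ` (\<Union>i<n - 1. closed_segment (t i) (t (Suc i)))"
      unfolding poly_path_def seg_def image_UN n_def[symmetric]
      using t segment_image by (intro SUP_cong) auto
    moreover have "closed_segment (t 0) (t (n - 1)) \<subseteq> (\<Union>i<n - 1. closed_segment (t i) (t (Suc i)))"
      by (rule closed_segment_subset_chain) (use n in linarith)
    ultimately show ?thesis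
      unfolding hd last segment_image by (simp add: image_mono)
  qed
  ultimately show ?thesis ..
qed

lemma bendless_edge_chord:
  assumes drawing: "planar_poly_drawing V E p r" and oct: "\<forall>e\<in>E. octilinear_polyline (r e)"
    and e: "{u, v} \<in> E" and no_bends: "bends (r {u, v}) = 0"
  shows "octilinear_seg (p u) (p v) \<and> closed_segment (p u) (p v) \<subseteq> poly_path (r {u, v})"
proof -
  have "\<forall>e\<in>E. simple_polyline (r e) \<and> (\<exists>u v. e = {u, v} \<and> hd (r e) = p u \<and> last (r e) = p v)"
    using drawing by (simp add: planar_poly_drawing_def)
  then obtain u' v' where simple: "simple_polyline (r {u, v})" and "{u, v} = {u', v'}"
    and ends: "hd (r {u, v}) = p u'" "last (r {u, v}) = p v'"
    using e by blast
  then have "u' = u \<and> v' = v \<or> u' = v \<and> v' = u" by (auto simp: doubleton_eq_iff)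
  moreover have "octilinear_seg (p u') (p v') \<and> closed_segment (p u') (p v') \<subseteq> poly_path (r {u, v})"
    using bendless_polyline_chord[OF simple _ no_bends] oct e ends by auto
  ultimately show ?thesis
    by (auto simp: closed_segment_commute octilinear_seg_def Let_def)
qed

section \<open>Octilinear drawings of \<open>K\<^sub>4\<close>\<close>

lemma octilinear_seg_cases:
  "octilinear_seg P Q \<longleftrightarrow>
     snd Q = snd P \<or> fst Q = fst P \<or> fst Q - fst P = snd Q - snd P \<or> fst Q - fst P = snd P - snd Q"
  unfolding octilinear_seg_def Let_def by (auto simp: abs_eq_iff)

lemma not_collinear_octilinear_directions:
  fixes P Q R :: pt
  assumes "\<not> collinear {P, Q, R}"
  shows "\<not> (snd Q = snd P \<and> snd R = snd P)" "\<not> (fst Q = fst P \<and> fst R = fst P)"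
    "\<not> (fst Q - fst P = snd Q - snd P \<and> fst R - fst P = snd R - snd P)"
    "\<not> (fst Q - fst P = snd P - snd Q \<and> fst R - fst P = snd P - snd R)"
proof -
  have along: "\<not> (Q = P + s *\<^sub>R w \<and> R = P + t *\<^sub>R w)" for s t w
  proof
    assume "Q = P + s *\<^sub>R w \<and> R = P + t *\<^sub>R w"
    then have "\<forall>x\<in>{P, Q, R}. \<exists>c. x = P + c *\<^sub>R w" by (auto intro: exI[of _ 0])
    then have "collinear {P, Q, R}" unfolding collinear_alt by blast
    with assms show False by contradiction
  qed
  show "\<not> (snd Q = snd P \<and> snd R = snd P)"
    using along[of "fst Q - fst P" "(1, 0)" "fst R - fst P"] by (auto simp: prod_eq_iff)
  show "\<not> (fst Q = fst P \<and> fst R = fst P)"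
    using along[of "snd Q - snd P" "(0, 1)" "snd R - snd P"] by (auto simp: prod_eq_iff)
  show "\<not> (fst Q - fst P = snd Q - snd P \<and> fst R - fst P = snd R - snd P)"
    using along[of "fst Q - fst P" "(1, 1)" "fst R - fst P"] by (auto simp: prod_eq_iff)
  show "\<not> (fst Q - fst P = snd P - snd Q \<and> fst R - fst P = snd P - snd R)"
    using along[of "fst Q - fst P" "(1, -1)" "fst R - fst P"] by (auto simp: prod_eq_iff)
qed

lemma octilinear_quadrangle_diagonals_bisect:
  fixes A B C D :: pt
  assumes "octilinear_seg A B" "octilinear_seg A C" "octilinear_seg A D"
    "octilinear_seg B C" "octilinear_seg B D" "octilinear_seg C D"
    and "\<not> collinear {A, B, C}" "\<not> collinear {A, B, D}" "\<not> collinear {A, C, D}" "\<not> collinear {B, C, D}"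
  shows "midpoint A B = midpoint C D \<or> midpoint A C = midpoint B D \<or> midpoint A D = midpoint B C"
proof -
  have "A \<noteq> B" "A \<noteq> C" "A \<noteq> D" "B \<noteq> C" "B \<noteq> D" "C \<noteq> D"
    using assms(7-10) by (auto simp: collinear_2 insert_absorb2 insert_commute)
  then show ?thesis
    using assms(1-6)[unfolded octilinear_seg_cases]
      not_collinear_octilinear_directions[OF assms(7)] not_collinear_octilinear_directions[OF assms(8)]
      not_collinear_octilinear_directions[OF assms(9)] not_collinear_octilinear_directions[OF assms(10)]
    unfolding midpoint_def prod_eq_iff
    by simp smt \<comment> \<open>a case analysis over the \<open>4\<^sup>6\<close> slope combinations\<close>
qed

lemma octilinear_drawing_of_K4_has_bend:
  assumes drawing: "planar_poly_drawing V E p r" and oct: "\<forall>e\<in>E. octilinear_polyline (r e)"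
    and vertices: "{a, b, c, d} \<subseteq> V" "distinct [a, b, c, d]"
    and edges: "\<And>x y. x \<in> {a, b, c, d} \<Longrightarrow> y \<in> {a, b, c, d} \<Longrightarrow> x \<noteq> y \<Longrightarrow> {x, y} \<in> E"
  shows "\<exists>x\<in>{a, b, c, d}. \<exists>y\<in>{a, b, c, d}. x \<noteq> y \<and> bends (r {x, y}) \<noteq> 0"
proof (rule ccontr)
  let ?K = "{a, b, c, d}"
  assume no_bend: "\<not> ?thesis"
  have avoids: "p w \<notin> poly_path (r e)" if "e \<in> E" "w \<in> V" "w \<notin> e" for e w
    using drawing that by (simp add: planar_poly_drawing_def)
  have meets: "poly_path (r e) \<inter> poly_path (r e') \<subseteq> p ` (e \<inter> e')"
    if "e \<in> E" "e' \<in> E" "e \<noteq> e'" for e e'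
    using drawing that by (simp add: planar_poly_drawing_def)
  from no_bend have chord: "octilinear_seg (p x) (p y) \<and> closed_segment (p x) (p y) \<subseteq> poly_path (r {x, y})"
    if "x \<in> ?K" "y \<in> ?K" "x \<noteq> y" for x y
    using bendless_edge_chord[OF drawing oct edges[OF that]] that by blast
  have off: "p w \<notin> closed_segment (p x) (p y)"
    if "x \<in> ?K" "y \<in> ?K" "w \<in> ?K" "x \<noteq> y" "w \<noteq> x" "w \<noteq> y" for x y w
  proof
    assume "p w \<in> closed_segment (p x) (p y)"
    then have "p w \<in> poly_path (r {x, y})" using chord that by blast
    moreover have "w \<in> V" using vertices that by blast
    ultimately show False
      using avoids[OF edges[of x y]] that by blast
  qed
  have general_position: "\<not> collinear {p x, p y, p w}"
    if "x \<in> ?K" "y \<in> ?K" "w \<in> ?K" "x \<noteq> y" "w \<noteq> x" "w \<noteq> y" for x y w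
    unfolding collinear_between_cases between_mem_segment
    using off[of y w x] off[of w x y] off[of x y w] that by blast
  have disjoint: "closed_segment (p x) (p y) \<inter> closed_segment (p z) (p w) = {}"
    if "distinct [x, y, z, w]" "x \<in> ?K" "y \<in> ?K" "z \<in> ?K" "w \<in> ?K" for x y z w
  proof -
    have "{x, y} \<noteq> {z, w}" "{x, y} \<inter> {z, w} = {}" using that(1) by auto
    then have "poly_path (r {x, y}) \<inter> poly_path (r {z, w}) = {}"
      using meets[OF edges[of x y] edges[of z w]] that by auto
    with chord[of x y] chord[of z w] that show ?thesis by auto
  qed
  have distinct_midpoints: "midpoint (p x) (p y) \<noteq> midpoint (p z) (p w)"
    if "distinct [x, y, z, w]" "x \<in> ?K" "y \<in> ?K" "z \<in> ?K" "w \<in> ?K" for x y z w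
    using disjoint[OF that] midpoint_in_closed_segment by (metis disjoint_iff)
  have "midpoint (p a) (p b) = midpoint (p c) (p d) \<or> midpoint (p a) (p c) = midpoint (p b) (p d)
      \<or> midpoint (p a) (p d) = midpoint (p b) (p c)"
    by (rule octilinear_quadrangle_diagonals_bisect) (use chord general_position vertices(2) in auto)
  then show False
    using distinct_midpoints[of a b c d] distinct_midpoints[of a c b d] distinct_midpoints[of a d b c]
      vertices(2) by auto
qed

section \<open>Disjoint copies of \<open>K\<^sub>4\<close>\<close>

lemma card_bent_edges_le_total_bends:
  assumes "finite E"
  shows "card {e \<in> E. bends (r e) \<noteq> 0} \<le> total_bends E r"
proof -
  have "card {e \<in> E. bends (r e) \<noteq> 0} = (\<Sum>e\<in>{e \<in> E. bends (r e) \<noteq> 0}. 1)" by simp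
  also have "\<dots> \<le> (\<Sum>e\<in>{e \<in> E. bends (r e) \<noteq> 0}. bends (r e))" by (rule sum_mono) auto
  also have "\<dots> \<le> total_bends E r"
    unfolding total_bends_def by (rule sum_mono2) (use assms in auto)
  finally show ?thesis .
qed

definition K4s_vertices :: "nat \<Rightarrow> nat set" where
  "K4s_vertices m = {..<4 * m}"

definition K4s_edges :: "nat \<Rightarrow> nat set set" where
  "K4s_edges m = {{4 * k + i, 4 * k + j} | k i j. k < m \<and> i < j \<and> j < 4}"

lemma K4s_edgesE:
  assumes "e \<in> K4s_edges m"
  obtains k i j where "k < m" "i < j" "j < 4" "e = {4 * k + i, 4 * k + j}"
  using assms unfolding K4s_edges_def by blast

lemma K4s_edgesI: "k < m \<Longrightarrow> i < j \<Longrightarrow> j < 4 \<Longrightarrow> {4 * k + i, 4 * k + j} \<in> K4s_edges m"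
  unfolding K4s_edges_def by blast

lemma K4s_edge_subset: "e \<in> K4s_edges m \<Longrightarrow> e \<subseteq> K4s_vertices m"
  by (erule K4s_edgesE) (auto simp: K4s_vertices_def)

lemma finite_K4s_edges: "finite (K4s_edges m)"
proof (rule finite_subset)
  show "K4s_edges m \<subseteq> Pow (K4s_vertices m)" using K4s_edge_subset by blast
qed (simp add: K4s_vertices_def)

lemma simple_graph_K4s: "simple_graph (K4s_vertices m) (K4s_edges m)"
  unfolding simple_graph_def
proof (intro conjI ballI)
  fix e assume e: "e \<in> K4s_edges m"
  then obtain k i j where "i < j" and e_eq: "e = {4 * k + i, 4 * k + j}" by (rule K4s_edgesE)
  then have "4 * k + i \<noteq> 4 * k + j" by simp
  then show "\<exists>u v. u \<in> K4s_vertices m \<and> v \<in> K4s_vertices m \<and> u \<noteq> v \<and> e = {u, v}"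
    using K4s_edge_subset[OF e] unfolding e_eq by blast
qed (simp add: K4s_vertices_def)

lemma degree_K4s_edges: "degree (K4s_edges m) v \<le> 3"
proof -
  define k where "k = v div 4"
  have "{e \<in> K4s_edges m. v \<in> e} \<subseteq> (\<lambda>w. {v, w}) ` ({4 * k..<4 * k + 4} - {v})"
  proof
    fix e assume "e \<in> {e \<in> K4s_edges m. v \<in> e}"
    then obtain k' i j where "i < j" "j < 4" "e = {4 * k' + i, 4 * k' + j}" "v \<in> e"
      by (auto elim: K4s_edgesE)
    moreover from this have "k' = k" by (auto simp: k_def)
    ultimately show "e \<in> (\<lambda>w. {v, w}) ` ({4 * k..<4 * k + 4} - {v})" by auto
  qed
  then have "degree (K4s_edges m) v \<le> card ((\<lambda>w. {v, w}) ` ({4 * k..<4 * k + 4} - {v}))"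
    unfolding degree_def by (intro card_mono) auto
  also have "\<dots> \<le> card ({4 * k..<4 * k + 4} - {v})" by (rule card_image_le) simp
  also have "\<dots> = 3" by (simp add: k_def)
  finally show ?thesis .
qed

text \<open>Each copy of \<open>K\<^sub>4\<close> is drawn straight as a triangle around an interior point, the \<open>k\<close>-th copy
  shifted into the strip \<open>10 k \<le> x \<le> 10 k + 4\<close> so that different copies cannot meet.\<close>
definition k4_point :: "nat \<Rightarrow> pt" where
  "k4_point i = [(0, 0), (4, 0), (0, 4), (1, 1)] ! i"

definition K4s_point :: "nat \<Rightarrow> pt" where
  "K4s_point u = (real (10 * (u div 4)), 0) + k4_point (u mod 4)"

definition K4s_route :: "nat set \<Rightarrow> pt list" where
  "K4s_route e = [K4s_point (Min e), K4s_point (Max e)]"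

definition K4s_strip :: "nat \<Rightarrow> pt set" where
  "K4s_strip k = {real (10 * k)..real (10 * k) + 4} \<times> UNIV"

lemma k4_edge_cases: "i < j \<Longrightarrow> j < (4::nat) \<Longrightarrow> (i, j) \<in> {(0, 1), (0, 2), (0, 3), (1, 2), (1, 3), (2, 3)}"
  by auto

lemma k4_segments_meet_at_common_ends:
  assumes "i < j" "j < 4" "i' < j'" "j' < 4" "(i, j) \<noteq> (i', j')"
  shows "closed_segment (k4_point i) (k4_point j) \<inter> closed_segment (k4_point i') (k4_point j')
    \<subseteq> k4_point ` ({i, j} \<inter> {i', j'})"
  using k4_edge_cases[OF assms(1,2)] k4_edge_cases[OF assms(3,4)] assms(5)
  by (auto simp: k4_point_def in_segment prod_eq_iff algebra_simps)

lemma k4_point_not_in_segment: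
  assumes "i < j" "j < 4" "l < 4" "l \<noteq> i" "l \<noteq> j"
  shows "k4_point l \<notin> closed_segment (k4_point i) (k4_point j)"
proof -
  have "l \<in> {0, 1, 2, 3}" using assms(3) by auto
  then show ?thesis
    using k4_edge_cases[OF assms(1,2)] assms(4,5)
    by (auto simp: k4_point_def in_segment prod_eq_iff algebra_simps)
qed

lemma k4_point_in_box: "i < 4 \<Longrightarrow> k4_point i \<in> {0..4} \<times> UNIV"
  by (auto simp: k4_point_def less_Suc_eq numeral_eq_Suc)

lemma k4_point_inj: "i < 4 \<Longrightarrow> j < 4 \<Longrightarrow> k4_point i = k4_point j \<Longrightarrow> i = j"
  by (auto simp: k4_point_def less_Suc_eq numeral_eq_Suc)

lemma K4s_point_copy: "i < 4 \<Longrightarrow> K4s_point (4 * k + i) = (real (10 * k), 0) + k4_point i"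
  by (simp add: K4s_point_def)

lemma K4s_point_in_strip: "K4s_point u \<in> K4s_strip (u div 4)"
  using k4_point_in_box[of "u mod 4"] by (auto simp: K4s_point_def K4s_strip_def)

lemma K4s_segment_in_strip:
  "closed_segment (K4s_point (4 * k + i)) (K4s_point (4 * k + j)) \<subseteq> K4s_strip k"
  if "i < 4" "j < 4"
proof (rule closed_segment_subset)
  show "convex (K4s_strip k)" by (simp add: K4s_strip_def convex_Times)
qed (use K4s_point_in_strip[of "4 * k + i"] K4s_point_in_strip[of "4 * k + j"] that in auto)

lemma K4s_strips_disjoint: "k \<noteq> k' \<Longrightarrow> K4s_strip k \<inter> K4s_strip k' = {}"
  by (auto simp: K4s_strip_def nat_neq_iff)

lemma K4s_route_eq: "i < j \<Longrightarrow> K4s_route {4 * k + i, 4 * k + j} = [K4s_point (4 * k + i), K4s_point (4 * k + j)]"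
  by (simp add: K4s_route_def min_def max_def)

lemma poly_path_Cons_Cons_Nil: "poly_path [a, b] = closed_segment a b"
  by (simp add: poly_path_def seg_def lessThan_Suc)

lemma inj_K4s_point: "inj K4s_point"
proof (rule injI)
  fix u v assume eq: "K4s_point u = K4s_point v"
  have "u div 4 = v div 4"
  proof (rule ccontr)
    assume "u div 4 \<noteq> v div 4"
    moreover have "K4s_point u \<in> K4s_strip (u div 4) \<inter> K4s_strip (v div 4)"
      using K4s_point_in_strip[of u] K4s_point_in_strip[of v] eq by simp
    ultimately show False using K4s_strips_disjoint by blast
  qed
  moreover from this eq have "u mod 4 = v mod 4"
    by (intro k4_point_inj) (simp_all add: K4s_point_def)
  ultimately show "u = v" by (metis div_mult_mod_eq)
qed

lemma K4s_copy_segments_meet_at_common_ends: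
  assumes "i < j" "j < 4" "i' < j'" "j' < 4" "(i, j) \<noteq> (i', j')"
  shows "closed_segment (K4s_point (4 * k + i)) (K4s_point (4 * k + j))
      \<inter> closed_segment (K4s_point (4 * k + i')) (K4s_point (4 * k + j'))
    \<subseteq> K4s_point ` ({4 * k + i, 4 * k + j} \<inter> {4 * k + i', 4 * k + j'})"
proof
  define T where "T = (real (10 * k), 0 :: real)"
  fix x
  assume "x \<in> closed_segment (K4s_point (4 * k + i)) (K4s_point (4 * k + j))
      \<inter> closed_segment (K4s_point (4 * k + i')) (K4s_point (4 * k + j'))"
  then have "T + (x - T) \<in> closed_segment (T + k4_point i) (T + k4_point j)"
    "T + (x - T) \<in> closed_segment (T + k4_point i') (T + k4_point j')"
    using assms by (simp_all add: K4s_point_copy T_def)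
  then have "x - T \<in> closed_segment (k4_point i) (k4_point j) \<inter> closed_segment (k4_point i') (k4_point j')"
    unfolding closed_segment_translation_eq by simp
  from subsetD[OF k4_segments_meet_at_common_ends[OF assms] this]
  obtain l where l: "l \<in> {i, j} \<inter> {i', j'}" and "x - T = k4_point l" by (rule imageE)
  then have "x = T + k4_point l" by (metis add.commute diff_add_cancel)
  moreover have "l < 4" using l assms by auto
  ultimately have "x = K4s_point (4 * k + l)" by (simp add: K4s_point_copy T_def)
  moreover have "4 * k + l \<in> {4 * k + i, 4 * k + j} \<inter> {4 * k + i', 4 * k + j'}" using l by auto
  ultimately show "x \<in> K4s_point ` ({4 * k + i, 4 * k + j} \<inter> {4 * k + i', 4 * k + j'})" by blast
qed

lemma K4s_point_notin_route:
  assumes "e \<in> K4s_edges m" "w \<notin> e"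
  shows "K4s_point w \<notin> poly_path (K4s_route e)"
proof -
  obtain k i j where ij: "i < j" "j < 4" and e: "e = {4 * k + i, 4 * k + j}"
    using assms(1) by (rule K4s_edgesE)
  have path: "poly_path (K4s_route e) = closed_segment (K4s_point (4 * k + i)) (K4s_point (4 * k + j))"
    using ij by (simp add: e K4s_route_eq poly_path_Cons_Cons_Nil)
  show ?thesis
  proof (cases "w div 4 = k")
    case True
    then have w: "w = 4 * k + w mod 4" using mult_div_mod_eq[of 4 w] by simp
    then have "w mod 4 \<noteq> i" "w mod 4 \<noteq> j" using assms(2) e by auto
    then have "k4_point (w mod 4) \<notin> closed_segment (k4_point i) (k4_point j)"
      using k4_point_not_in_segment[OF ij] by simp
    then show ?thesis
      unfolding path using ij by (subst w) (simp add: K4s_point_copy)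
  next
    case False
    then show ?thesis
      using K4s_point_in_strip[of w] K4s_segment_in_strip[of i j k] K4s_strips_disjoint[OF False] ij
      unfolding path by auto
  qed
qed

lemma planar_poly_drawing_K4s: "planar_poly_drawing (K4s_vertices m) (K4s_edges m) K4s_point K4s_route"
  unfolding planar_poly_drawing_def
proof (intro conjI ballI impI)
  show "inj_on K4s_point (K4s_vertices m)" using inj_K4s_point by (rule inj_on_subset) simp
next
  fix e assume "e \<in> K4s_edges m"
  then obtain k i j where ij: "i < j" "j < 4" and e: "e = {4 * k + i, 4 * k + j}" by (rule K4s_edgesE)
  have "K4s_point (4 * k + i) \<noteq> K4s_point (4 * k + j)" using inj_K4s_point ij by (auto dest: injD)
  with ij show "simple_polyline (K4s_route e)"
    by (simp add: e K4s_route_eq simple_polyline_def)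
  show "\<exists>u v. e = {u, v} \<and> hd (K4s_route e) = K4s_point u \<and> last (K4s_route e) = K4s_point v"
    using ij by (auto simp: e K4s_route_eq)
next
  fix e e' assume "e \<in> K4s_edges m" "e' \<in> K4s_edges m" "e \<noteq> e'"
  obtain k i j where ij: "i < j" "j < 4" and e: "e = {4 * k + i, 4 * k + j}"
    using \<open>e \<in> K4s_edges m\<close> by (rule K4s_edgesE)
  obtain k' i' j' where ij': "i' < j'" "j' < 4" and e': "e' = {4 * k' + i', 4 * k' + j'}"
    using \<open>e' \<in> K4s_edges m\<close> by (rule K4s_edgesE)
  show "poly_path (K4s_route e) \<inter> poly_path (K4s_route e') \<subseteq> K4s_point ` (e \<inter> e')"
  proof (cases "k = k'")
    case True
    with \<open>e \<noteq> e'\<close> have "(i, j) \<noteq> (i', j')" by (auto simp: e e')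
    then show ?thesis
      using K4s_copy_segments_meet_at_common_ends[OF ij ij', of k] ij ij' True
      by (simp add: e e' K4s_route_eq poly_path_Cons_Cons_Nil)
  next
    case False
    then show ?thesis
      using K4s_segment_in_strip[of i j k] K4s_segment_in_strip[of i' j' k'] K4s_strips_disjoint[OF False] ij ij'
      by (auto simp: e e' K4s_route_eq poly_path_Cons_Cons_Nil)
  qed
next
  fix e w assume "e \<in> K4s_edges m" "w \<notin> e"
  then show "K4s_point w \<notin> poly_path (K4s_route e)" by (rule K4s_point_notin_route)
qed

lemma k_planar_K4s: "k_planar 4 (K4s_vertices m) (K4s_edges m)"
proof -
  have "degree (K4s_edges m) v \<le> 4" for v using degree_K4s_edges[of m v] by simp
  then show ?thesis
    unfolding k_planar_def planar_graph_def using simple_graph_K4s planar_poly_drawing_K4s by blast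
qed

lemma K4s_copy_has_bent_edge:
  assumes drawing: "planar_octilinear_drawing (K4s_vertices m) (K4s_edges m) q r" and "k < m"
  shows "\<exists>e\<in>K4s_edges m. Min e div 4 = k \<and> bends (r e) \<noteq> 0"
proof -
  let ?K = "{4 * k, 4 * k + 1, 4 * k + 2, 4 * k + 3}"
  have in_copy: "x div 4 = k" if "x \<in> ?K" for x
    using that by auto
  have edges: "{x, y} \<in> K4s_edges m" if "x \<in> ?K" "y \<in> ?K" "x \<noteq> y" for x y
  proof -
    define i j where "i = x - 4 * k" and "j = y - 4 * k"
    have ij: "x = 4 * k + i" "y = 4 * k + j" "i < 4" "j < 4" "i \<noteq> j"
      using that by (auto simp: i_def j_def)
    show ?thesis
    proof (cases "i < j")
      case True
      then show ?thesis using K4s_edgesI[OF \<open>k < m\<close> True ij(4)] ij(1,2) by simp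
    next
      case False
      then have "j < i" using ij(5) by simp
      from K4s_edgesI[OF \<open>k < m\<close> this ij(3)] show ?thesis
        using ij(1,2) by (simp add: insert_commute)
    qed
  qed
  have poly: "planar_poly_drawing (K4s_vertices m) (K4s_edges m) (\<lambda>v. (of_int (fst (q v)), of_int (snd (q v)))) r"
    and oct: "\<forall>e\<in>K4s_edges m. octilinear_polyline (r e)"
    using drawing by (simp_all add: planar_octilinear_drawing_def)
  have "?K \<subseteq> K4s_vertices m" using \<open>k < m\<close> by (auto simp: K4s_vertices_def)
  then have "\<exists>x\<in>?K. \<exists>y\<in>?K. x \<noteq> y \<and> bends (r {x, y}) \<noteq> 0"
    by (rule octilinear_drawing_of_K4_has_bend[OF poly oct]) (simp_all add: edges)
  then obtain x y where "x \<in> ?K" "y \<in> ?K" "x \<noteq> y" "bends (r {x, y}) \<noteq> 0" by blast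
  moreover from this have "Min {x, y} div 4 = k" using in_copy by (simp add: min_def)
  ultimately show ?thesis using edges by blast
qed

lemma K4s_total_bends_ge:
  assumes "planar_octilinear_drawing (K4s_vertices m) (K4s_edges m) q r"
  shows "m \<le> total_bends (K4s_edges m) r"
proof -
  let ?bent = "{e \<in> K4s_edges m. bends (r e) \<noteq> 0}"
  have "{..<m} \<subseteq> (\<lambda>e. Min e div 4) ` ?bent"
  proof
    fix k assume "k \<in> {..<m}"
    then obtain e where "e \<in> ?bent" "k = Min e div 4"
      using K4s_copy_has_bent_edge[OF assms] by fastforce
    then show "k \<in> (\<lambda>e. Min e div 4) ` ?bent" by (rule rev_image_eqI)
  qed
  then have "card {..<m} \<le> card ?bent"
    by (rule surj_card_le[rotated]) (simp add: finite_K4s_edges)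
  also have "\<dots> \<le> total_bends (K4s_edges m) r"
    by (rule card_bent_edges_le_total_bends[OF finite_K4s_edges])
  finally show ?thesis by simp
qed

theorem mainTheorem4:
  shows "\<exists>C :: (nat set \<times> nat set set) set.
    (\<forall>N. \<exists>(V, E)\<in>C. card V > N) \<and>
    (\<forall>(V, E)\<in>C. k_planar 4 V E) \<and>
    (\<forall>(V, E)\<in>C. \<not> (\<exists>q r. planar_octilinear_drawing V E q r \<and> (\<forall>e\<in>E. bends (r e) = 0))) \<and>
    (\<exists>c :: real. c > 0 \<and> (\<exists>n0. \<forall>(V, E)\<in>C. card V \<ge> n0 \<longrightarrow>
       (\<forall>q r. planar_octilinear_drawing V E q r \<and> (\<forall>e\<in>E. bends (r e) \<le> 1) \<longrightarrow>
          real (total_bends E r) \<ge> c * real (card V))))"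
proof (intro exI[of _ "(\<lambda>m. (K4s_vertices m, K4s_edges m)) ` {1..}"] conjI)
  show "\<forall>N. \<exists>(V, E)\<in>(\<lambda>m. (K4s_vertices m, K4s_edges m)) ` {1..}. card V > N"
  proof
    fix N
    have "(K4s_vertices (N + 1), K4s_edges (N + 1)) \<in> (\<lambda>m. (K4s_vertices m, K4s_edges m)) ` {1..}"
      by simp
    moreover have "card (K4s_vertices (N + 1)) > N" by (simp add: K4s_vertices_def)
    ultimately show "\<exists>(V, E)\<in>(\<lambda>m. (K4s_vertices m, K4s_edges m)) ` {1..}. card V > N" by blast
  qed
  show "\<forall>(V, E)\<in>(\<lambda>m. (K4s_vertices m, K4s_edges m)) ` {1..}. k_planar 4 V E"
    using k_planar_K4s by auto
  show "\<forall>(V, E)\<in>(\<lambda>m. (K4s_vertices m, K4s_edges m)) ` {1..}.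
      \<not> (\<exists>q r. planar_octilinear_drawing V E q r \<and> (\<forall>e\<in>E. bends (r e) = 0))"
    by (fastforce dest: K4s_copy_has_bent_edge[where k = 0])
  \<comment> \<open>The bound holds for every planar octilinear drawing.\<close>
  show "\<exists>c :: real. c > 0 \<and> (\<exists>n0. \<forall>(V, E)\<in>(\<lambda>m. (K4s_vertices m, K4s_edges m)) ` {1..}.
      card V \<ge> n0 \<longrightarrow> (\<forall>q r. planar_octilinear_drawing V E q r \<and> (\<forall>e\<in>E. bends (r e) \<le> 1) \<longrightarrow>
        real (total_bends E r) \<ge> c * real (card V)))"
    using K4s_total_bends_ge by (intro exI[of _ "1 / 4"] conjI exI[of _ 0]) (force simp: K4s_vertices_def)+
qed

end
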